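(* Let $G$ be a connected graph with $n\ge 2$ vertices and let $x$ be an $l_\infty$-Fiedler vector of $G$. Then $\|x\|_2^2\ge \dfrac{n}{n-1}$. Moreover, equality holds if and only if $G$ is isomorphic to the complete graph $K_n$.
   Context: For a finite simple undirected graph $G$ with $n$ vertices, let $\mathcal{F}=\{x\in\mathbb{R}^{V(G)} : \sum_{v} x_v = 0,\ \|x\|_\infty = 1\}$, for $x\in\mathcal{F}$ let $\gamma_x(G)=\max_{uv\in E(G)}|x_u-x_v|$, and $\gamma(G)=\min_{x\in\mathcal{F}}\gamma_x(G)$. A vector $x\in\mathcal{F}$ with $\gamma_x(G)=\gamma(G)$ is called an $l_\infty$-Fiedler vector of $G$. $\|x\|_2$ is the Euclidean norm. *)

theory Defs
  imports Complex_Main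
begin

definition simple_graph :: "'a set \<Rightarrow> ('a \<Rightarrow> 'a \<Rightarrow> bool) \<Rightarrow> bool" where
  "simple_graph V E \<longleftrightarrow> finite V \<and> (\<forall>u v. E u v \<longrightarrow> u \<in> V \<and> v \<in> V)
     \<and> (\<forall>u v. E u v \<longrightarrow> E v u) \<and> (\<forall>u. \<not> E u u)"

definition connected_graph :: "'a set \<Rightarrow> ('a \<Rightarrow> 'a \<Rightarrow> bool) \<Rightarrow> bool" where
  "connected_graph V E \<longleftrightarrow> (\<forall>u\<in>V. \<forall>v\<in>V. E\<^sup>*\<^sup>* u v)"

definition iso_complete :: "'a set \<Rightarrow> ('a \<Rightarrow> 'a \<Rightarrow> bool) \<Rightarrow> nat \<Rightarrow> bool" where
  "iso_complete V E n \<longleftrightarrow> (\<exists>f. bij_betw f V {0..<n} \<and>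
      (\<forall>u\<in>V. \<forall>v\<in>V. E u v \<longleftrightarrow> f u \<noteq> f v))"

text \<open>The set F of vectors in R^V (only the values on V matter).\<close>
definition Fset :: "'a set \<Rightarrow> ('a \<Rightarrow> real) set" where
  "Fset V = {x. (\<Sum>v\<in>V. x v) = 0 \<and> Max ((\<lambda>v. \<bar>x v\<bar>) ` V) = 1}"

definition gamma_x :: "'a set \<Rightarrow> ('a \<Rightarrow> 'a \<Rightarrow> bool) \<Rightarrow> ('a \<Rightarrow> real) \<Rightarrow> real" where
  "gamma_x V E x = Max {\<bar>x u - x v\<bar> | u v. u \<in> V \<and> v \<in> V \<and> E u v}"

definition gamma :: "'a set \<Rightarrow> ('a \<Rightarrow> 'a \<Rightarrow> bool) \<Rightarrow> real" where
  "gamma V E = Inf (gamma_x V E ` Fset V)"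

definition linf_fiedler :: "'a set \<Rightarrow> ('a \<Rightarrow> 'a \<Rightarrow> bool) \<Rightarrow> ('a \<Rightarrow> real) \<Rightarrow> bool" where
  "linf_fiedler V E x \<longleftrightarrow> x \<in> Fset V \<and> gamma_x V E x = gamma V E"

end

theory Submission
  imports Defs
begin

text \<open>Pick a vertex \<open>u\<close> with \<open>|x u| = 1\<close> and put \<open>m = n - 1\<close>. As \<open>x\<close> sums to zero, its
  squared norm is \<open>n/m\<close> plus the sum of \<open>(x v + x u / m)\<^sup>2\<close> over \<open>v \<noteq> u\<close>; this gives the bound, with equality iff
  \<open>x\<close> is balanced: \<open>x v = - x u / m\<close> for all \<open>v \<noteq> u\<close>.
  Test vectors bound \<open>\<gamma>(G)\<close>: the balanced vector itself shows \<open>\<gamma>(G) \<le> n/m\<close> for every graph, and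
  \<open>e\<^sub>a - e\<^sub>b\<close> shows \<open>\<gamma>(G) \<le> 1\<close> when \<open>a, b\<close> are non-adjacent. A balanced Fiedler vector differs by
  \<open>n/m > 1\<close> across an edge at \<open>u\<close> (one exists by connectivity), so \<open>G\<close> is complete. Conversely,
  in \<open>K\<^sub>n\<close> all \<open>v \<noteq> u\<close> are adjacent to \<open>u\<close>, and the bounds \<open>|x u - x v| \<le> n/m\<close> together
  with \<open>\<Sum> x = 0\<close> force \<open>x\<close> to be balanced.\<close>

lemma sum_remove_eq_uminus:
  fixes x :: "'a \<Rightarrow> real"
  assumes "finite V" and "u \<in> V" and "(\<Sum>v\<in>V. x v) = 0"
  shows "(\<Sum>v\<in>V-{u}. x v) = - x u"
  using assms sum.remove[of V u x] by simp

lemma real_card_Diff_singleton: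
  assumes "finite V" and "u \<in> V"
  shows "real (card (V - {u})) = real (card V) - 1"
  using card.remove[OF assms] by simp

lemma sum_squares_decomp:
  fixes x :: "'a \<Rightarrow> real"
  assumes fin: "finite V" and u: "u \<in> V" and sum0: "(\<Sum>v\<in>V. x v) = 0" and card: "card V \<ge> 2"
  defines "m \<equiv> real (card V) - 1"
  shows "(\<Sum>v\<in>V. (x v)\<^sup>2) = (x u)\<^sup>2 * real (card V) / m + (\<Sum>v\<in>V-{u}. (x v + x u / m)\<^sup>2)"
proof -
  have m_pos: "m > 0" using card by (simp add: m_def)
  have card_rest: "real (card (V-{u})) = m"
    using real_card_Diff_singleton[OF fin u] by (simp add: m_def)
  have "(\<Sum>v\<in>V-{u}. (x v + x u / m)\<^sup>2)
      = (\<Sum>v\<in>V-{u}. (x v)\<^sup>2) + 2 * (x u / m) * (\<Sum>v\<in>V-{u}. x v) + m * (x u / m)\<^sup>2"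
    by (simp add: power2_sum sum.distrib sum_distrib_left card_rest algebra_simps sum_divide_distrib)
  also have "\<dots> = (\<Sum>v\<in>V-{u}. (x v)\<^sup>2) - (x u)\<^sup>2 / m"
    using m_pos by (simp add: sum_remove_eq_uminus[OF fin u sum0] power2_eq_square field_simps)
  also have "(\<Sum>v\<in>V-{u}. (x v)\<^sup>2) = (\<Sum>v\<in>V. (x v)\<^sup>2) - (x u)\<^sup>2"
    using sum.remove[OF fin u, of "\<lambda>v. (x v)\<^sup>2"] by simp
  finally show ?thesis
    using m_pos by (simp add: m_def field_simps)
qed

lemma sum_squares_ge_card_ratio:
  fixes x :: "'a \<Rightarrow> real"
  assumes fin: "finite V" and u: "u \<in> V" and sum0: "(\<Sum>v\<in>V. x v) = 0"
    and peak: "\<bar>x u\<bar> = 1" and card: "card V \<ge> 2"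
  defines "m \<equiv> real (card V) - 1"
  shows "real (card V) / m \<le> (\<Sum>v\<in>V. (x v)\<^sup>2)"
    and "(\<Sum>v\<in>V. (x v)\<^sup>2) = real (card V) / m \<longleftrightarrow> (\<forall>v\<in>V-{u}. x v = - x u / m)"
proof -
  have "(x u)\<^sup>2 = 1" using peak by (metis power2_abs one_power2)
  then have decomp: "(\<Sum>v\<in>V. (x v)\<^sup>2) = real (card V) / m + (\<Sum>v\<in>V-{u}. (x v + x u / m)\<^sup>2)"
    using sum_squares_decomp[OF fin u sum0 card] by (simp add: m_def)
  then show "real (card V) / m \<le> (\<Sum>v\<in>V. (x v)\<^sup>2)"
    by (simp add: sum_nonneg)
  have "(\<Sum>v\<in>V-{u}. (x v + x u / m)\<^sup>2) = 0 \<longleftrightarrow> (\<forall>v\<in>V-{u}. x v + x u / m = 0)"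
    using fin by (simp add: sum_nonneg_eq_0_iff)
  then show "(\<Sum>v\<in>V. (x v)\<^sup>2) = real (card V) / m \<longleftrightarrow> (\<forall>v\<in>V-{u}. x v = - x u / m)"
    by (simp add: decomp eq_neg_iff_add_eq_0)
qed

lemma finite_edge_differences:
  "finite V \<Longrightarrow> finite {\<bar>y a - y b\<bar> | a b. a \<in> V \<and> b \<in> V \<and> E a b}"
  by (rule finite_subset[of _ "{\<bar>y a - y b\<bar> | a b. a \<in> V \<and> b \<in> V}"])
    (auto intro: finite_image_set2)

lemma edge_diff_le_gamma_x:
  assumes "simple_graph V E" and "E a b"
  shows "\<bar>y a - y b\<bar> \<le> gamma_x V E y"
  using assms unfolding gamma_x_def simple_graph_def
  by (intro Max_ge finite_edge_differences) auto

lemma gamma_x_le: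
  assumes "simple_graph V E" and "E a b"
    and "\<And>c d. E c d \<Longrightarrow> \<bar>y c - y d\<bar> \<le> B"
  shows "gamma_x V E y \<le> B"
  using assms unfolding gamma_x_def simple_graph_def
  by (intro Max.boundedI finite_edge_differences) blast+

lemma gamma_le_gamma_x:
  assumes "simple_graph V E" and "E a b" and "y \<in> Fset V"
  shows "gamma V E \<le> gamma_x V E y"
proof -
  have "bdd_below (gamma_x V E ` Fset V)"
    using edge_diff_le_gamma_x[OF assms(1,2)] by (intro bdd_belowI2[of _ 0]) (meson abs_ge_zero order_trans)
  then show ?thesis
    unfolding gamma_def using assms(3) by (intro cInf_lower) auto
qed

lemma linf_fiedler_edge_diff_le:
  assumes G: "simple_graph V E" and x: "linf_fiedler V E x" and y: "y \<in> Fset V"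
    and y_bound: "\<And>a b. E a b \<Longrightarrow> \<bar>y a - y b\<bar> \<le> B" and cd: "E c d"
  shows "\<bar>x c - x d\<bar> \<le> B"
proof -
  have "\<bar>x c - x d\<bar> \<le> gamma_x V E x" using edge_diff_le_gamma_x[OF G cd] .
  also have "\<dots> = gamma V E" using x by (simp add: linf_fiedler_def)
  also have "\<dots> \<le> gamma_x V E y" using gamma_le_gamma_x[OF G cd y] .
  also have "\<dots> \<le> B" using gamma_x_le[OF G cd y_bound] .
  finally show ?thesis .
qed

lemma Fset_attains_one:
  assumes "finite V" and "V \<noteq> {}" and "x \<in> Fset V"
  obtains u where "u \<in> V" and "\<bar>x u\<bar> = 1"
proof -
  have "Max ((\<lambda>v. \<bar>x v\<bar>) ` V) \<in> (\<lambda>v. \<bar>x v\<bar>) ` V"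
    using assms(1,2) by (intro Max_in) auto
  then show thesis
    using that assms(3) unfolding Fset_def by auto
qed

lemma Fset_memI:
  assumes "finite V" and "(\<Sum>v\<in>V. y v) = 0" and "\<And>v. v \<in> V \<Longrightarrow> \<bar>y v\<bar> \<le> 1"
    and "u \<in> V" and "\<bar>y u\<bar> = 1"
  shows "y \<in> Fset V"
  unfolding Fset_def using assms by (auto intro!: Max_eqI)

lemma linf_fiedler_complete_if_edge_diff_gt_one:
  assumes G: "simple_graph V E" and x: "linf_fiedler V E x"
    and cd: "E c d" and gt: "\<bar>x c - x d\<bar> > 1"
  shows "\<forall>a\<in>V. \<forall>b\<in>V. E a b \<longleftrightarrow> a \<noteq> b"
proof (rule ccontr)
  assume "\<not> ?thesis"
  then obtain a b where ab: "a \<in> V" "b \<in> V" "a \<noteq> b" "\<not> E a b"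
    using G unfolding simple_graph_def by blast
  define y :: "'a \<Rightarrow> real" where "y v = (if v = a then 1 else 0) - (if v = b then 1 else 0)" for v
  have fin: "finite V" using G by (simp add: simple_graph_def)
  have "y \<in> Fset V"
    by (rule Fset_memI[OF fin _ _ \<open>a \<in> V\<close>]) (use fin ab in \<open>auto simp: y_def sum_subtractf\<close>)
  moreover have "\<bar>y c' - y d'\<bar> \<le> 1" if "E c' d'" for c' d'
    using that ab G unfolding simple_graph_def y_def by auto
  ultimately have "\<bar>x c - x d\<bar> \<le> 1"
    using linf_fiedler_edge_diff_le[OF G x _ _ cd] by blast
  with gt show False by simp
qed

lemma linf_fiedler_edge_diff_le_card_ratio:
  assumes G: "simple_graph V E" and x: "linf_fiedler V E x" and card: "card V \<ge> 2" and cd: "E c d"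
  shows "\<bar>x c - x d\<bar> \<le> real (card V) / (real (card V) - 1)"
proof -
  define m where "m = real (card V) - 1"
  define t where "t = 1 / m"
  have fin: "finite V" using G by (simp add: simple_graph_def)
  have m_ge: "m \<ge> 1" using card by (simp add: m_def)
  have t: "0 < t" "t \<le> 1" "m * t = 1" using m_ge by (auto simp: t_def)
  obtain u where u: "u \<in> V" using card by fastforce
  define z where "z v = (if v = u then 1 else - t)" for v
  have card_rest: "real (card (V-{u})) = m"
    using real_card_Diff_singleton[OF fin u] by (simp add: m_def)
  have "(\<Sum>v\<in>V. z v) = z u + (\<Sum>v\<in>V-{u}. - t)"
    unfolding sum.remove[OF fin u] by (simp add: z_def)
  then have "(\<Sum>v\<in>V. z v) = 0"
    using t by (simp add: card_rest z_def)
  then have "z \<in> Fset V"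
    by (rule Fset_memI[OF fin _ _ u]) (use t in \<open>auto simp: z_def\<close>)
  moreover have "\<bar>z c' - z d'\<bar> \<le> 1 + t" for c' d'
    using t by (simp add: z_def abs_if)
  ultimately have "\<bar>x c - x d\<bar> \<le> 1 + t"
    using linf_fiedler_edge_diff_le[OF G x _ _ cd] by blast
  also have "1 + t = real (card V) / m"
    using m_ge by (simp add: t_def m_def field_simps)
  finally show ?thesis unfolding m_def .
qed

lemma balanced_if_diffs_from_peak_le:
  fixes x :: "'a \<Rightarrow> real"
  assumes fin: "finite V" and u: "u \<in> V" and sum0: "(\<Sum>v\<in>V. x v) = 0"
    and peak: "\<bar>x u\<bar> = 1" and card: "card V \<ge> 2"
  defines "m \<equiv> real (card V) - 1"
  assumes diff_le: "\<And>v. v \<in> V - {u} \<Longrightarrow> \<bar>x u - x v\<bar> \<le> real (card V) / m"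
  shows "\<forall>v\<in>V-{u}. x v = - x u / m"
proof -
  have m_pos: "m > 0" using card by (simp add: m_def)
  have xu_sq: "x u * x u = 1" using peak by (metis abs_mult_self_eq mult_1)
  have card_rest: "real (card (V-{u})) = m"
    using real_card_Diff_singleton[OF fin u] by (simp add: m_def)
  \<comment> \<open>multiplying by \<open>x u = \<plusminus>1\<close> turns each bound into \<open>x u * (x v + x u / m) \<ge> 0\<close>, and these terms sum to 0\<close>
  have nonneg: "x u * (x v + x u / m) \<ge> 0" if v: "v \<in> V - {u}" for v
  proof -
    have "1 - x u * x v = x u * (x u - x v)" using xu_sq by (simp add: algebra_simps)
    also have "\<dots> \<le> \<bar>x u - x v\<bar>" using peak by (metis abs_ge_self abs_mult mult_1)
    also have "\<dots> \<le> 1 + 1 / m"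
      using diff_le[OF v] m_pos by (simp add: m_def field_simps)
    finally show ?thesis using xu_sq by (simp add: algebra_simps)
  qed
  have "(\<Sum>v\<in>V-{u}. x u * (x v + x u / m)) = x u * (\<Sum>v\<in>V-{u}. x v) + m * (x u * x u / m)"
    by (simp add: distrib_left sum.distrib sum_distrib_left card_rest)
  also have "\<dots> = 0"
    using m_pos by (simp add: sum_remove_eq_uminus[OF fin u sum0] xu_sq)
  finally have "\<forall>v\<in>V-{u}. x u * (x v + x u / m) = 0"
    by (subst (asm) sum_nonneg_eq_0_iff) (use fin nonneg in auto)
  moreover have "x u \<noteq> 0" using peak by auto
  ultimately show ?thesis
    by (simp add: eq_neg_iff_add_eq_0)
qed

lemma connected_graph_obtain_neighbour:
  assumes "connected_graph V E" and "u \<in> V" and "card V \<ge> 2"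
  obtains w where "E u w"
proof -
  have "\<not> V \<subseteq> {u}" using assms(3) card_mono[of "{u}" V] by auto
  then obtain q where q: "q \<in> V" "q \<noteq> u" by blast
  have "E\<^sup>*\<^sup>* u q" using assms(1,2) q(1) unfolding connected_graph_def by blast
  then show thesis
    by (rule converse_rtranclpE) (use q that in auto)
qed

lemma iso_complete_card_iff:
  assumes "simple_graph V E"
  shows "iso_complete V E (card V) \<longleftrightarrow> (\<forall>a\<in>V. \<forall>b\<in>V. E a b \<longleftrightarrow> a \<noteq> b)"
proof -
  have inj_iff: "f a = f b \<longleftrightarrow> a = b"
    if "bij_betw f V {0..<card V}" "a \<in> V" "b \<in> V" for f :: "'a \<Rightarrow> nat" and a b
    using inj_on_eq_iff[OF bij_betw_imp_inj_on[OF that(1)] that(2,3)] .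
  show ?thesis
  proof
    assume "iso_complete V E (card V)"
    then obtain f where f: "bij_betw f V {0..<card V}" and fE: "\<forall>a\<in>V. \<forall>b\<in>V. E a b \<longleftrightarrow> f a \<noteq> f b"
      unfolding iso_complete_def by blast
    show "\<forall>a\<in>V. \<forall>b\<in>V. E a b \<longleftrightarrow> a \<noteq> b"
      using fE inj_iff[OF f] by simp
  next
    assume complete: "\<forall>a\<in>V. \<forall>b\<in>V. E a b \<longleftrightarrow> a \<noteq> b"
    have "finite V" using assms by (simp add: simple_graph_def)
    then obtain f :: "'a \<Rightarrow> nat" where f: "bij_betw f V {0..<card V}"
      using ex_bij_betw_finite_nat by blast
    then have "\<forall>a\<in>V. \<forall>b\<in>V. E a b \<longleftrightarrow> f a \<noteq> f b"
      using complete inj_iff[OF f] by simp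
    with f show "iso_complete V E (card V)"
      unfolding iso_complete_def by blast
  qed
qed

lemma complete_if_linf_fiedler_balanced:
  assumes G: "simple_graph V E" and conn: "connected_graph V E" and card: "card V \<ge> 2"
    and x: "linf_fiedler V E x" and u: "u \<in> V" and peak: "\<bar>x u\<bar> = 1"
  defines "m \<equiv> real (card V) - 1"
  assumes balanced: "\<forall>v\<in>V-{u}. x v = - x u / m"
  shows "\<forall>a\<in>V. \<forall>b\<in>V. E a b \<longleftrightarrow> a \<noteq> b"
proof -
  have m_ge: "m \<ge> 1" using card by (simp add: m_def)
  obtain w where uw: "E u w" using connected_graph_obtain_neighbour[OF conn u card] .
  then have "w \<in> V - {u}" using G by (auto simp: simple_graph_def)
  then have "x u - x w = x u * (1 + 1 / m)" using balanced by (simp add: algebra_simps)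
  then have "\<bar>x u - x w\<bar> = 1 + 1 / m" using peak m_ge by (simp add: abs_mult)
  then have "\<bar>x u - x w\<bar> > 1" using m_ge by simp
  then show ?thesis
    by (rule linf_fiedler_complete_if_edge_diff_gt_one[OF G x uw])
qed

theorem lemma4p4:
  fixes V :: "'a set" and E :: "'a \<Rightarrow> 'a \<Rightarrow> bool" and x :: "'a \<Rightarrow> real"
  assumes "simple_graph V E" and "connected_graph V E" and "card V \<ge> 2"
    and "linf_fiedler V E x"
  shows "(\<Sum>v\<in>V. (x v)\<^sup>2) \<ge> real (card V) / (real (card V) - 1)
    \<and> ((\<Sum>v\<in>V. (x v)\<^sup>2) = real (card V) / (real (card V) - 1) \<longleftrightarrow> iso_complete V E (card V))"
proof -
  define m where "m = real (card V) - 1"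
  have fin: "finite V" using assms(1) by (simp add: simple_graph_def)
  have xF: "x \<in> Fset V" using assms(4) by (simp add: linf_fiedler_def)
  then have sum0: "(\<Sum>v\<in>V. x v) = 0" by (simp add: Fset_def)
  have "V \<noteq> {}" using assms(3) by auto
  then obtain u where u: "u \<in> V" and peak: "\<bar>x u\<bar> = 1"
    using Fset_attains_one[OF fin _ xF] by blast
  note sum_squares = sum_squares_ge_card_ratio[OF fin u sum0 peak assms(3), folded m_def]
  have "(\<forall>v\<in>V-{u}. x v = - x u / m) \<longleftrightarrow> (\<forall>a\<in>V. \<forall>b\<in>V. E a b \<longleftrightarrow> a \<noteq> b)"
  proof
    assume "\<forall>v\<in>V-{u}. x v = - x u / m"
    then show "\<forall>a\<in>V. \<forall>b\<in>V. E a b \<longleftrightarrow> a \<noteq> b"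
      unfolding m_def by (rule complete_if_linf_fiedler_balanced[OF assms u peak])
  next
    assume complete: "\<forall>a\<in>V. \<forall>b\<in>V. E a b \<longleftrightarrow> a \<noteq> b"
    show "\<forall>v\<in>V-{u}. x v = - x u / m"
      unfolding m_def
      by (rule balanced_if_diffs_from_peak_le[OF fin u sum0 peak assms(3)])
        (use complete u in \<open>auto intro: linf_fiedler_edge_diff_le_card_ratio[OF assms(1,4,3)]\<close>)
  qed
  then show ?thesis
    using sum_squares iso_complete_card_iff[OF assms(1)] unfolding m_def[symmetric] by simp
qed

end
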